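(* Assume that $M_0$ is compact and is a global attractor for $F$, i.e. $M_0$ is an attractor for $F$ and $\omega(x)\subset M_0$ for every $x\in M$. Let $\varepsilon_n\downarrow0$, and for each $n$ let $\mu_n$ be a QSD for $p^{\varepsilon_n}$ with eigenvalue $\lambda_n$. If $\mu_n\to\mu$ weakly as Borel probability measures on $M$, then $\mu(M_0)=1$.
   Context: Setting. Let $M\subset\mathbb{R}^d$ be closed; all topological notions are relative to $M$. Let $F:M\to M$ be continuous with $\|F\|:=\sup_{x\in M}\|F(x)\|<\infty$. For $A\subset M$ and $\delta>0$, put $N^\delta(A)=\{x\in M:\inf_{y\in A}\|x-y\|<\delta\}$. Let $\{X^\varepsilon\}_{\varepsilon>0}$ be a family of time-homogeneous Markov chains on $M$ with transition kernels $p^\varepsilon(x,\Gamma)$. The following standing hypotheses are assumed. (SH1) For every $\delta>0$, $\beta_\delta(\varepsilon):=\sup_{x\in M}p^\varepsilon(x,M\setminus N^\delta(F(x)))\to0$ as $\varepsilon\to0$. (SH2) $M=M_0\cup M_1$ (disjoint), where $M_0$ is closed, $F(M_0)\subseteq M_0$, $F(M_1)\subseteq M_1$, and $p^\varepsilon(x,M_1)=0$ for all $\varepsilon>0$ and $x\in M_0$. QSD. A Borel probability measure $\mu_\varepsilon$ on $M_1$ is a quasi-stationary distribution (QSD) for $p^\varepsilon$ if there is $\lambda_\varepsilon\in(0,1)$ with $\int_{M_1}p^\varepsilon(x,\Gamma)\,\mu_\varepsilon(dx)=\lambda_\varepsilon\mu_\varepsilon(\Gamma)$ for all Borel $\Gamma\subset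 M_1$. Attractor. A compact set $A$ is an attractor for $F$ if there is an open neighborhood $U$ of $A$ with $\bigcap_{n\ge1}F^n(U)=A$ and such that for every open $V\supset A$ there is $n(V)$ with $F^n(U)\subset V$ for all $n\ge n(V)$. The set $\omega(x)=\bigcap_{n\ge1}\overline{\{F^p(x):p\ge n\}}$ is the $\omega$-limit set of $x$. *)

theory Defs
  imports "HOL-Probability.Probability"
begin

definition nbhd :: "'a::euclidean_space set \<Rightarrow> real \<Rightarrow> 'a set \<Rightarrow> 'a set" where
  "nbhd M \<delta> A = {x \<in> M. (\<exists>y\<in>A. norm (x - y) < \<delta>)}"

text \<open>Borel probability measure on M (represented as a Borel measure on the ambient space
  giving full mass to M).\<close>
definition borel_prob_on :: "'a::euclidean_space set \<Rightarrow> 'a measure \<Rightarrow> bool" where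
  "borel_prob_on S \<mu> \<longleftrightarrow> prob_space \<mu> \<and> sets \<mu> = sets borel \<and> measure \<mu> S = 1"

definition markov_kernels_on :: "'a::euclidean_space set \<Rightarrow> (real \<Rightarrow> 'a \<Rightarrow> 'a measure) \<Rightarrow> bool" where
  "markov_kernels_on M p \<longleftrightarrow>
     (\<forall>\<epsilon>>0. (\<forall>x\<in>M. borel_prob_on M (p \<epsilon> x)) \<and>
       (\<forall>\<Gamma>\<in>sets borel. (\<lambda>x. measure (p \<epsilon> x) \<Gamma>) \<in> borel_measurable (restrict_space borel M)))"

definition is_QSD :: "'a::euclidean_space set \<Rightarrow> ('a \<Rightarrow> 'a measure) \<Rightarrow> 'a measure \<Rightarrow> real \<Rightarrow> bool" where
  "is_QSD M1 q \<mu> lam \<longleftrightarrow> borel_prob_on M1 \<mu> \<and> 0 < lam \<and> lam < 1 \<and>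
     (\<forall>\<Gamma>\<in>sets borel. \<Gamma> \<subseteq> M1 \<longrightarrow>
        (LINT x:M1|\<mu>. measure (q x) \<Gamma>) = lam * measure \<mu> \<Gamma>)"

definition is_attractor :: "'a::euclidean_space set \<Rightarrow> ('a \<Rightarrow> 'a) \<Rightarrow> 'a set \<Rightarrow> bool" where
  "is_attractor M F A \<longleftrightarrow> compact A \<and> A \<subseteq> M \<and>
     (\<exists>U. openin (top_of_set M) U \<and> A \<subseteq> U \<and>
        (\<Inter>n\<in>{1..}. (F ^^ n) ` U) = A \<and>
        (\<forall>V. openin (top_of_set M) V \<and> A \<subseteq> V \<longrightarrow>
           (\<exists>N. \<forall>n\<ge>N. (F ^^ n) ` U \<subseteq> V)))"

text \<open>omega-limit set; closure relative to M (M is closed, so this is the usual closure).\<close>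
definition omega_limit :: "'a::euclidean_space set \<Rightarrow> ('a \<Rightarrow> 'a) \<Rightarrow> 'a \<Rightarrow> 'a set" where
  "omega_limit M F x = (\<Inter>n\<in>{1..}. M \<inter> closure {(F ^^ k) x | k. k \<ge> n})"

definition weak_conv_on :: "'a::euclidean_space set \<Rightarrow> (nat \<Rightarrow> 'a measure) \<Rightarrow> 'a measure \<Rightarrow> bool" where
  "weak_conv_on M \<mu>s \<mu> \<longleftrightarrow>
     (\<forall>f :: 'a \<Rightarrow> real. continuous_on M f \<and> bounded (f ` M) \<longrightarrow>
        (\<lambda>n. (LINT x:M|\<mu>s n. f x)) \<longlonglongrightarrow> (LINT x:M|\<mu>. f x))"

end

theory Submission
  imports Defs
begin

(* For a Borel set Gamma in M1, the QSD
   equation and (SH1) give lambda_n mu_n(Gamma) <= beta + mu_n(pre Gamma), where pre Gamma is the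
   set of points of M1 whose image is delta-close to Gamma and beta = beta_delta(eps_n) -> 0.
   Iterating k times, lambda_n^k mu_n(B) <= k beta + mu_n(pre^k B).  Points of pre^k B start
   delta-pseudo-orbits of length k ending in B; since M0 attracts M uniformly and finite pseudo-orbits
   shadow true orbits, such pseudo-orbits end near M0, so pre^k B is empty for B = {dist(., M0) >= r}.
   If mu(M1) > 0, weak convergence and (SH1) keep lambda_n bounded below, so mu_n(B) -> 0 and, by
   weak convergence again, mu gives no mass to {dist(., M0) >= 2r}; letting r -> 0 yields
   mu(M1) = 0, a contradiction. *)

section \<open>Orbits of F and the global attractor\<close>

lemma funpow_in:
  assumes "F ` M \<subseteq> M" and "x \<in> M"
  shows "(F ^^ n) x \<in> M"
  using assms by (induction n) auto

lemma continuous_on_funpow: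
  assumes "continuous_on M F" and "F ` M \<subseteq> M"
  shows "continuous_on M (F ^^ n)"
proof (induction n)
  case 0
  then show ?case by simp
next
  case (Suc n)
  have "(F ^^ n) ` M \<subseteq> M"
    using funpow_in[OF assms(2)] by blast
  with Suc.IH show ?case
    by (simp add: continuous_on_compose2[OF assms(1)])
qed

text \<open>Since F maps the closed set M into a bounded part of itself, the closure of F(M) is a compact
  trapping region inside M; every forward orbit lies in it after one step.\<close>

lemma compact_closure_image:
  fixes M :: "'a::euclidean_space set"
  assumes "closed M" and "F ` M \<subseteq> M" and "bounded (F ` M)"
  shows "compact (closure (F ` M))" and "closure (F ` M) \<subseteq> M"
  using assms by (simp_all add: compact_eq_bounded_closed bounded_closure closure_minimal)

lemma omega_limit_subsequence:
  assumes \<sigma>: "strict_mono \<sigma>" and lim: "(\<lambda>i. (F ^^ \<sigma> i) x) \<longlonglongrightarrow> l" and "l \<in> M"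
  shows "l \<in> omega_limit M F x"
proof -
  have "l \<in> closure {(F ^^ k) x | k. k \<ge> n}" for n
    unfolding closure_sequential
  proof (intro exI conjI allI)
    show "(\<lambda>i. (F ^^ \<sigma> (i + n)) x) \<longlonglongrightarrow> l"
      by (rule LIMSEQ_ignore_initial_segment[OF lim])
    fix i
    have "n \<le> \<sigma> (i + n)"
      using seq_suble[OF \<sigma>, of "i + n"] by linarith
    then show "(F ^^ \<sigma> (i + n)) x \<in> {(F ^^ k) x | k. k \<ge> n}"
      by blast
  qed
  then show ?thesis
    unfolding omega_limit_def using \<open>l \<in> M\<close> by blast
qed

text \<open>If the omega-limit set of x lies in A, the orbit of x enters every open neighbourhood of A:
  otherwise the orbit stays in the compact set closure (F M) - Ob and accumulates there, producing
  an omega-limit point outside Ob.\<close>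

lemma orbit_enters_nbhd:
  fixes M :: "'a::euclidean_space set"
  assumes M_closed: "closed M" and F_into: "F ` M \<subseteq> M" and F_bdd: "bounded (F ` M)"
    and omega: "omega_limit M F x \<subseteq> A" and x: "x \<in> M"
    and Ob_open: "open Ob" and A_Ob: "A \<subseteq> Ob"
  shows "\<exists>m. (F ^^ m) x \<in> Ob"
proof (rule ccontr)
  assume never: "\<nexists>m. (F ^^ m) x \<in> Ob"
  define K where "K = closure (F ` M) - Ob"
  have "compact K"
    unfolding K_def using compact_closure_image[OF M_closed F_into F_bdd] Ob_open
    by (intro compact_diff)
  have "K \<subseteq> M"
    unfolding K_def using compact_closure_image[OF M_closed F_into F_bdd] by blast
  define s where "s m = (F ^^ Suc m) x" for m
  have s_in_K: "s m \<in> K" for m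
  proof -
    have "s m \<in> F ` M"
      unfolding s_def using funpow_in[OF F_into x, of m] by simp
    then have "s m \<in> closure (F ` M)"
      by (rule closure_subset[THEN subsetD])
    moreover have "s m \<notin> Ob"
      using never unfolding s_def by blast
    ultimately show ?thesis
      unfolding K_def by simp
  qed
  obtain l r where l: "l \<in> K" and r: "strict_mono r" and lim: "(s \<circ> r) \<longlonglongrightarrow> l"
    using compact_imp_seq_compact[OF \<open>compact K\<close>] s_in_K unfolding seq_compact_def by meson
  have "strict_mono (\<lambda>i. Suc (r i))"
    using r by (simp add: strict_mono_def)
  moreover have "(\<lambda>i. (F ^^ Suc (r i)) x) \<longlonglongrightarrow> l"
    using lim unfolding s_def comp_def .
  ultimately have "l \<in> omega_limit M F x"
    using l \<open>K \<subseteq> M\<close> by (intro omega_limit_subsequence) auto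
  then show False
    using omega A_Ob l unfolding K_def by blast
qed

text \<open>A set containing all omega-limit sets of a nonempty M is itself nonempty
  (the orbit of any point would have to enter the empty open set).\<close>

lemma global_attractor_nonempty:
  fixes M :: "'a::euclidean_space set"
  assumes "closed M" and "F ` M \<subseteq> M" and "bounded (F ` M)"
    and "\<And>x. x \<in> M \<Longrightarrow> omega_limit M F x \<subseteq> A" and "M \<noteq> {}"
  shows "A \<noteq> {}"
proof
  assume "A = {}"
  obtain x where x: "x \<in> M" using assms(5) by blast
  have "\<exists>m. (F ^^ m) x \<in> {}"
    using \<open>A = {}\<close> by (intro orbit_enters_nbhd[OF assms(1-3) assms(4)[OF x] x]) auto
  then show False by blast
qed

text \<open>Compactness turns pointwise entrance times into a uniform bound: if every point of the compact set
  K eventually enters the open set Ob, there is m0 such that every point of K enters Ob within m0 steps.\<close>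

lemma uniform_entrance_time:
  assumes K: "compact K" "K \<subseteq> M"
    and F_cont: "continuous_on M F" and F_into: "F ` M \<subseteq> M"
    and Ob_open: "open Ob" and enters: "\<And>y. y \<in> K \<Longrightarrow> \<exists>m. (F ^^ m) y \<in> Ob"
  shows "\<exists>m0. \<forall>y\<in>K. \<exists>m\<le>m0. (F ^^ m) y \<in> Ob"
proof -
  have "\<forall>m. \<exists>W. open W \<and> W \<inter> M = (F ^^ m) -` Ob \<inter> M"
    using continuous_on_funpow[OF F_cont F_into] Ob_open
    unfolding continuous_on_open_invariant by blast
  from choice[OF this] obtain W
    where W: "\<forall>m. open (W m) \<and> W m \<inter> M = (F ^^ m) -` Ob \<inter> M"
    by blast
  have W_open: "open (W m)" for m
    using W by blast
  have cover: "K \<subseteq> (\<Union>m\<in>UNIV. W m)"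
  proof
    fix y assume "y \<in> K"
    then obtain m where "(F ^^ m) y \<in> Ob"
      using enters by blast
    then have "y \<in> W m"
      using W \<open>y \<in> K\<close> K(2) by blast
    then show "y \<in> (\<Union>m\<in>UNIV. W m)"
      by blast
  qed
  obtain T where "T \<subseteq> UNIV" and "finite T" and T_cover: "K \<subseteq> (\<Union>m\<in>T. W m)"
    by (rule compactE_image[OF K(1) W_open cover])
  have "\<exists>m\<le>Max T. (F ^^ m) y \<in> Ob" if "y \<in> K" for y
  proof -
    obtain m where "m \<in> T" and "y \<in> W m"
      using T_cover \<open>y \<in> K\<close> by blast
    then have "(F ^^ m) y \<in> Ob"
      using W \<open>y \<in> K\<close> K(2) by blast
    moreover have "m \<le> Max T"
      using \<open>finite T\<close> \<open>m \<in> T\<close> by simp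
    ultimately show ?thesis by blast
  qed
  then show ?thesis by blast
qed

text \<open>Orbits enter the basin U within a uniform time after the first
  step, and the attractor property then drives U into V.\<close>

lemma uniform_attraction:
  fixes M :: "'a::euclidean_space set"
  assumes M_closed: "closed M" and F_cont: "continuous_on M F"
    and F_into: "F ` M \<subseteq> M" and F_bdd: "bounded (F ` M)"
    and attr: "is_attractor M F A"
    and global: "\<And>x. x \<in> M \<Longrightarrow> omega_limit M F x \<subseteq> A"
    and V: "openin (top_of_set M) V" "A \<subseteq> V"
  shows "\<exists>N. \<forall>n\<ge>N. \<forall>x\<in>M. (F ^^ n) x \<in> V"
proof -
  obtain U where U: "openin (top_of_set M) U" "A \<subseteq> U"
    and absorbs: "\<forall>V. openin (top_of_set M) V \<and> A \<subseteq> V \<longrightarrow> (\<exists>N. \<forall>n\<ge>N. (F ^^ n) ` U \<subseteq> V)"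
    using attr unfolding is_attractor_def by (elim conjE exE) (intro that)
  obtain Ob where Ob: "open Ob" "U = M \<inter> Ob"
    using U(1) unfolding openin_open by blast
  obtain n0 where n0: "\<And>n. n \<ge> n0 \<Longrightarrow> (F ^^ n) ` U \<subseteq> V"
    using absorbs V by blast
  define K where "K = closure (F ` M)"
  have K: "compact K" "K \<subseteq> M"
    unfolding K_def by (fact compact_closure_image[OF M_closed F_into F_bdd])+
  have "A \<subseteq> Ob"
    using U(2) Ob(2) by blast
  have "\<exists>m. (F ^^ m) y \<in> Ob" if "y \<in> K" for y
  proof -
    have y: "y \<in> M" using K(2) that by blast
    show ?thesis
      by (rule orbit_enters_nbhd[OF M_closed F_into F_bdd global[OF y] y Ob(1) \<open>A \<subseteq> Ob\<close>])
  qed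
  then obtain m0 where m0: "\<And>y. y \<in> K \<Longrightarrow> \<exists>m\<le>m0. (F ^^ m) y \<in> Ob"
    using uniform_entrance_time[OF K F_cont F_into Ob(1)] by blast
  have "\<forall>n\<ge>Suc (n0 + m0). \<forall>x\<in>M. (F ^^ n) x \<in> V"
  proof (intro allI impI ballI)
    fix n x assume n: "n \<ge> Suc (n0 + m0)" and x: "x \<in> M"
    have "F x \<in> K"
      unfolding K_def using x by (intro closure_subset[THEN subsetD] imageI)
    then obtain m where "m \<le> m0" and "(F ^^ m) (F x) \<in> Ob"
      using m0 by blast
    moreover have "(F ^^ m) (F x) \<in> M"
      using F_into x by (intro funpow_in[OF F_into]) blast
    ultimately have in_U: "(F ^^ m) (F x) \<in> U"
      using Ob(2) by blast
    define d where "d = n - Suc m"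
    have "n = Suc (d + m)" and "d \<ge> n0"
      using n \<open>m \<le> m0\<close> unfolding d_def by linarith+
    have "(F ^^ n) x = (F ^^ d) ((F ^^ m) (F x))"
      unfolding \<open>n = Suc (d + m)\<close> by (simp add: funpow_add funpow_swap1)
    moreover have "(F ^^ d) ((F ^^ m) (F x)) \<in> V"
      using n0[OF \<open>d \<ge> n0\<close>] in_U by (rule image_subset_iff[THEN iffD1, rule_format])
    ultimately show "(F ^^ n) x \<in> V" by simp
  qed
  then show ?thesis by (rule exI)
qed

section \<open>Pseudo-orbits\<close>

definition pseudo_orbit :: "'a::metric_space set \<Rightarrow> ('a \<Rightarrow> 'a) \<Rightarrow> real \<Rightarrow> nat \<Rightarrow> (nat \<Rightarrow> 'a) \<Rightarrow> bool" where
  "pseudo_orbit M F \<delta> k y \<longleftrightarrow> (\<forall>j\<le>k. y j \<in> M) \<and> (\<forall>j<k. dist (y (Suc j)) (F (y j)) < \<delta>)"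

lemma pseudo_orbit_prefix:
  assumes y: "pseudo_orbit M F \<delta> (Suc k) y" and "\<delta> \<le> \<delta>'"
  shows "pseudo_orbit M F \<delta>' k y"
proof -
  have "\<forall>j\<le>k. y j \<in> M"
    using y unfolding pseudo_orbit_def by simp
  moreover have "dist (y (Suc j)) (F (y j)) < \<delta>'" if "j < k" for j
  proof -
    have "dist (y (Suc j)) (F (y j)) < \<delta>"
      using y that unfolding pseudo_orbit_def by simp
    then show ?thesis
      using \<open>\<delta> \<le> \<delta>'\<close> by linarith
  qed
  ultimately show ?thesis
    unfolding pseudo_orbit_def by blast
qed

text \<open>F is uniformly continuous near its image: points of M close to a point of F(M) have
  close images.  Both lie in a compact subset of M, on which F is uniformly continuous.\<close>

lemma uniform_continuity_near_image:
  fixes M :: "'a::euclidean_space set"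
  assumes M_closed: "closed M" and F_cont: "continuous_on M F"
    and F_into: "F ` M \<subseteq> M" and F_bdd: "bounded (F ` M)" and "\<eta> > 0"
  obtains e where "e > 0"
    and "\<And>a b. a \<in> M \<Longrightarrow> b \<in> F ` M \<Longrightarrow> dist a b < e \<Longrightarrow> dist (F a) (F b) < \<eta>"
proof -
  obtain B where B: "\<And>z. z \<in> F ` M \<Longrightarrow> norm z \<le> B"
    using F_bdd unfolding bounded_iff by blast
  define L where "L = M \<inter> cball 0 (B + 1)"
  have "compact L"
    unfolding L_def using M_closed by (intro closed_Int_compact compact_cball)
  moreover have "continuous_on L F"
    using F_cont unfolding L_def by (rule continuous_on_subset) blast
  ultimately have "uniformly_continuous_on L F"
    by (intro compact_uniformly_continuous)
  then obtain e where "e > 0"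
    and e: "\<And>a b. a \<in> L \<Longrightarrow> b \<in> L \<Longrightarrow> dist a b < e \<Longrightarrow> dist (F a) (F b) < \<eta>"
    using \<open>\<eta> > 0\<close> unfolding uniformly_continuous_on_def by metis
  have close: "dist (F a) (F b) < \<eta>"
    if "a \<in> M" "b \<in> F ` M" "dist a b < min e 1" for a b
  proof -
    have "norm b \<le> B" using B that(2) by blast
    moreover have "norm a \<le> norm b + dist a b"
      by (metis dist_norm norm_triangle_sub)
    ultimately have "a \<in> L" "b \<in> L"
      unfolding L_def using that F_into by auto
    then show ?thesis using e that(3) by simp
  qed
  have "min e 1 > 0"
    using \<open>e > 0\<close> by simp
  then show ?thesis
    using close by (rule that)
qed

text \<open>Finite-time shadowing: a sufficiently fine pseudo-orbit of length k ends close to the true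
  k-th iterate of its starting point; the errors are controlled step by step by the uniform
  continuity of F near its image.\<close>

lemma pseudo_orbit_shadowing:
  fixes M :: "'a::euclidean_space set"
  assumes M_closed: "closed M" and F_cont: "continuous_on M F"
    and F_into: "F ` M \<subseteq> M" and F_bdd: "bounded (F ` M)"
    and "\<eta> > 0"
  shows "\<exists>\<delta>>0. \<forall>y. pseudo_orbit M F \<delta> k y \<longrightarrow> dist (y k) ((F ^^ k) (y 0)) < \<eta>"
  using \<open>\<eta> > 0\<close>
proof (induction k arbitrary: \<eta>)
  case 0
  then show ?case by (intro exI[of _ 1]) simp
next
  case (Suc k)
  obtain e where "e > 0"
    and close: "\<And>a b. a \<in> M \<Longrightarrow> b \<in> F ` M \<Longrightarrow> dist a b < e \<Longrightarrow> dist (F a) (F b) < \<eta> / 2"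
    using uniform_continuity_near_image[OF M_closed F_cont F_into F_bdd half_gt_zero[OF Suc.prems]]
    by blast
  obtain \<delta>1 where "\<delta>1 > 0"
    and \<delta>1: "\<And>y. pseudo_orbit M F \<delta>1 k y \<Longrightarrow> dist (y k) ((F ^^ k) (y 0)) < e"
    using Suc.IH[of e] \<open>e > 0\<close> by auto
  show ?case
  proof (intro exI[of _ "min \<delta>1 (\<eta> / 2)"] conjI allI impI)
    show "min \<delta>1 (\<eta> / 2) > 0" using \<open>\<delta>1 > 0\<close> Suc.prems by simp
    fix y assume y: "pseudo_orbit M F (min \<delta>1 (\<eta> / 2)) (Suc k) y"
    have near: "dist (y k) ((F ^^ k) (y 0)) < e"
      using \<delta>1 pseudo_orbit_prefix[OF y] by simp
    have step: "dist (y (Suc k)) (F (y k)) < \<eta> / 2"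
      using y unfolding pseudo_orbit_def by auto
    have y0: "y 0 \<in> M" and yk: "y k \<in> M"
      using y unfolding pseudo_orbit_def by auto
    have drift: "dist (F (y k)) (F ((F ^^ k) (y 0))) < \<eta> / 2"
    proof (cases k)
      case 0
      then show ?thesis using Suc.prems by simp
    next
      case (Suc k')
      then have "(F ^^ k) (y 0) \<in> F ` M"
        using funpow_in[OF F_into y0, of k'] by simp
      then show ?thesis using close yk near by blast
    qed
    have "dist (y (Suc k)) ((F ^^ Suc k) (y 0))
        \<le> dist (y (Suc k)) (F (y k)) + dist (F (y k)) (F ((F ^^ k) (y 0)))"
      by (simp add: dist_triangle)
    then show "dist (y (Suc k)) ((F ^^ Suc k) (y 0)) < \<eta>"
      using step drift by linarith
  qed
qed

text \<open>Combining uniform attraction with shadowing: for every r > 0 there are delta > 0 and k such that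
  every delta-pseudo-orbit of length k ends within distance r of the global attractor A.\<close>

lemma pseudo_orbits_approach_attractor:
  fixes M :: "'a::euclidean_space set"
  assumes M_closed: "closed M" and F_cont: "continuous_on M F"
    and F_into: "F ` M \<subseteq> M" and F_bdd: "bounded (F ` M)"
    and attr: "is_attractor M F A"
    and global: "\<And>x. x \<in> M \<Longrightarrow> omega_limit M F x \<subseteq> A"
    and "r > 0"
  shows "\<exists>\<delta>>0. \<exists>k. \<forall>y. pseudo_orbit M F \<delta> k y \<longrightarrow> infdist (y k) A < r"
proof -
  define V where "V = M \<inter> {x. infdist x A < r / 2}"
  have "open {x. infdist x A < r / 2}"
    by (intro open_Collect_less continuous_intros)
  then have "openin (top_of_set M) V"
    unfolding V_def by (rule openin_open_Int)
  moreover have "A \<subseteq> V"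
  proof
    fix a assume "a \<in> A"
    moreover have "A \<subseteq> M"
      using attr unfolding is_attractor_def by blast
    ultimately have "a \<in> M"
      by blast
    with \<open>a \<in> A\<close> show "a \<in> V"
      unfolding V_def using \<open>r > 0\<close> by simp
  qed
  ultimately obtain N where "\<forall>n\<ge>N. \<forall>x\<in>M. (F ^^ n) x \<in> V"
    using uniform_attraction[OF M_closed F_cont F_into F_bdd attr global] by blast
  then have N: "\<And>x. x \<in> M \<Longrightarrow> (F ^^ N) x \<in> V"
    by blast
  obtain \<delta> where "\<delta> > 0"
    and \<delta>: "\<And>y. pseudo_orbit M F \<delta> N y \<Longrightarrow> dist (y N) ((F ^^ N) (y 0)) < r / 2"
    using pseudo_orbit_shadowing[OF M_closed F_cont F_into F_bdd, of "r / 2" N] \<open>r > 0\<close>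
    by (metis half_gt_zero)
  have "infdist (y N) A < r" if y: "pseudo_orbit M F \<delta> N y" for y
  proof -
    have "y 0 \<in> M" using y unfolding pseudo_orbit_def by simp
    then have "infdist ((F ^^ N) (y 0)) A < r / 2"
      using N unfolding V_def by blast
    moreover have "infdist (y N) A \<le> infdist ((F ^^ N) (y 0)) A + dist (y N) ((F ^^ N) (y 0))"
      by (rule infdist_triangle)
    ultimately show ?thesis using \<delta>[OF y] by linarith
  qed
  then show ?thesis using \<open>\<delta> > 0\<close> by blast
qed

section \<open>Measure-theoretic tools\<close>

lemma space_eq_UNIV_if_sets_borel: "sets \<nu> = sets borel \<Longrightarrow> space \<nu> = UNIV"
  using sets_eq_imp_space_eq by fastforce

lemma superlevel_set_closed:
  fixes d :: "'a::topological_space \<Rightarrow> real"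
  assumes "closed M" and "continuous_on M d"
  shows "closed {x \<in> M. t \<le> d x}"
  using assms by (intro continuous_on_closed_Collect_le continuous_on_const)

lemma set_integral_le_measure:
  fixes g :: "'a::euclidean_space \<Rightarrow> real"
  assumes P: "prob_space \<nu>" and S: "sets \<nu> = sets borel" and E: "E \<in> sets borel"
    and g01: "\<And>x. x \<in> M \<Longrightarrow> 0 \<le> g x \<and> g x \<le> 1"
    and g_supp: "\<And>x. x \<in> M \<Longrightarrow> 0 < g x \<Longrightarrow> x \<in> E"
  shows "(LINT x:M|\<nu>. g x) \<le> measure \<nu> E"
proof -
  interpret prob_space \<nu> by (rule P)
  have "integrable \<nu> (indicator E :: 'a \<Rightarrow> real)"
    using E S by (intro integrable_real_indicator) (simp_all add: less_top[symmetric])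
  then have "integral\<^sup>L \<nu> (\<lambda>x. indicator M x * g x) \<le> integral\<^sup>L \<nu> (indicator E)"
  proof (rule integral_mono')
    fix x
    show "indicator M x * g x \<le> (indicator E x :: real)"
      using g01[of x] g_supp[of x] by (cases "x \<in> M"; cases "g x > 0") (auto simp: indicator_def)
  qed simp
  then show ?thesis
    unfolding set_lebesgue_integral_def using space_eq_UNIV_if_sets_borel[OF S] by simp
qed

lemma measure_le_set_integral:
  fixes g :: "'a::euclidean_space \<Rightarrow> real"
  assumes P: "prob_space \<nu>" and S: "sets \<nu> = sets borel" and M_closed: "closed M"
    and g_cont: "continuous_on M g" and g01: "\<And>x. x \<in> M \<Longrightarrow> 0 \<le> g x \<and> g x \<le> 1"
    and E: "E \<subseteq> M" and g_one: "\<And>x. x \<in> E \<Longrightarrow> g x = 1"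
  shows "measure \<nu> E \<le> (LINT x:M|\<nu>. g x)"
proof -
  interpret prob_space \<nu> by (rule P)
  have "AE x in \<nu>. norm (indicator M x * g x) \<le> 1"
    using g01 by (intro AE_I2) (auto simp: indicator_def)
  moreover have "(\<lambda>x. indicator M x *\<^sub>R g x) \<in> borel_measurable borel"
    using M_closed g_cont by (intro borel_measurable_continuous_on_indicator) auto
  then have "(\<lambda>x. indicator M x * g x) \<in> borel_measurable \<nu>"
    using S by (simp cong: measurable_cong_sets)
  ultimately have "integrable \<nu> (\<lambda>x. indicator M x * g x)"
    by (rule integrable_const_bound)
  then have "integral\<^sup>L \<nu> (indicator E) \<le> integral\<^sup>L \<nu> (\<lambda>x. indicator M x * g x)"
  proof (rule integral_mono')
    fix x
    show "(indicator E x :: real) \<le> indicator M x * g x"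
      using g01[of x] g_one[of x] E by (cases "x \<in> E") (auto simp: indicator_def)
    show "0 \<le> indicator M x * g x"
      using g01[of x] by (auto simp: indicator_def)
  qed
  then show ?thesis
    unfolding set_lebesgue_integral_def using space_eq_UNIV_if_sets_borel[OF S] by simp
qed

text \<open>The proof integrates the continuous
  ramp max 0 (min 1 (d/a - 1)), which is 1 on the first set and vanishes off the second.\<close>

lemma weak_conv_superlevel:
  fixes M :: "'a::euclidean_space set" and d :: "'a \<Rightarrow> real"
  assumes weak: "weak_conv_on M \<mu>s \<mu>"
    and \<mu>s: "\<And>n. prob_space (\<mu>s n)" "\<And>n. sets (\<mu>s n) = sets borel"
    and \<mu>: "prob_space \<mu>" "sets \<mu> = sets borel"
    and M_closed: "closed M" and d_cont: "continuous_on M d"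
    and "a > 0" and c: "c < measure \<mu> {x \<in> M. 2 * a \<le> d x}"
  shows "eventually (\<lambda>n. c < measure (\<mu>s n) {x \<in> M. a \<le> d x}) sequentially"
proof -
  define g where "g x = max 0 (min 1 (d x / a - 1))" for x
  have g_cont: "continuous_on M g"
    unfolding g_def using d_cont \<open>a > 0\<close> by (intro continuous_intros) auto
  have g01: "0 \<le> g x \<and> g x \<le> 1" for x
    unfolding g_def by auto
  have "bounded (g ` M)"
    unfolding bounded_iff using g01 by (intro exI[of _ 1]) auto
  then have lim: "(\<lambda>n. LINT x:M|\<mu>s n. g x) \<longlonglongrightarrow> (LINT x:M|\<mu>. g x)"
    using weak g_cont unfolding weak_conv_on_def by blast
  have "measure \<mu> {x \<in> M. 2 * a \<le> d x} \<le> (LINT x:M|\<mu>. g x)"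
  proof (rule measure_le_set_integral[OF \<mu> M_closed g_cont g01])
    fix x assume "x \<in> {x \<in> M. 2 * a \<le> d x}"
    then have "2 \<le> d x / a"
      using \<open>a > 0\<close> by (simp add: pos_le_divide_eq)
    then show "g x = 1"
      unfolding g_def by simp
  qed auto
  with c have "eventually (\<lambda>n. c < (LINT x:M|\<mu>s n. g x)) sequentially"
    by (intro order_tendstoD(1)[OF lim]) simp
  moreover have "(LINT x:M|\<mu>s n. g x) \<le> measure (\<mu>s n) {x \<in> M. a \<le> d x}" for n
  proof (rule set_integral_le_measure[OF \<mu>s(1,2)])
    show "{x \<in> M. a \<le> d x} \<in> sets borel"
      using superlevel_set_closed[OF M_closed d_cont] by simp
    fix x assume "x \<in> M" and "0 < g x"
    then have "1 < d x / a"
      unfolding g_def by (simp add: max_def min_def split: if_splits)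
    then show "x \<in> {x \<in> M. a \<le> d x}"
      using \<open>x \<in> M\<close> \<open>a > 0\<close> by (simp add: less_divide_eq)
  qed (use g01 in auto)
  ultimately show ?thesis
    by (elim eventually_mono) (rule less_le_trans)
qed

lemma weak_conv_superlevel_null:
  fixes M :: "'a::euclidean_space set" and d :: "'a \<Rightarrow> real"
  assumes weak: "weak_conv_on M \<mu>s \<mu>"
    and \<mu>s: "\<And>n. prob_space (\<mu>s n)" "\<And>n. sets (\<mu>s n) = sets borel"
    and \<mu>: "prob_space \<mu>" "sets \<mu> = sets borel"
    and M_closed: "closed M" and d_cont: "continuous_on M d" and "a > 0"
    and to_zero: "(\<lambda>n. measure (\<mu>s n) {x \<in> M. a \<le> d x}) \<longlonglongrightarrow> 0"
  shows "measure \<mu> {x \<in> M. 2 * a \<le> d x} = 0"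
proof (rule ccontr)
  let ?c = "measure \<mu> {x \<in> M. 2 * a \<le> d x} / 2"
  assume "measure \<mu> {x \<in> M. 2 * a \<le> d x} \<noteq> 0"
  then have "0 < ?c" and "?c < measure \<mu> {x \<in> M. 2 * a \<le> d x}"
    using measure_nonneg[of \<mu>] by (simp_all add: order_less_le)
  then have "eventually (\<lambda>n. ?c < measure (\<mu>s n) {x \<in> M. a \<le> d x}) sequentially"
    by (intro weak_conv_superlevel[OF weak \<mu>s \<mu> M_closed d_cont \<open>a > 0\<close>])
  moreover have "eventually (\<lambda>n. measure (\<mu>s n) {x \<in> M. a \<le> d x} < ?c) sequentially"
    using order_tendstoD(2)[OF to_zero \<open>0 < ?c\<close>] .
  ultimately have "eventually (\<lambda>_. False) sequentially"
    by eventually_elim simp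
  then show False by simp
qed

lemma null_if_superlevels_null:
  fixes M :: "'a::euclidean_space set" and d :: "'a \<Rightarrow> real"
  assumes P: "prob_space \<nu>" and S: "sets \<nu> = sets borel"
    and M_closed: "closed M" and d_cont: "continuous_on M d"
    and null: "\<And>t. t > 0 \<Longrightarrow> measure \<nu> {x \<in> M. t \<le> d x} = 0"
  shows "measure \<nu> {x \<in> M. 0 < d x} = 0"
proof -
  interpret prob_space \<nu> by (rule P)
  define E where "E m = {x \<in> M. inverse (real (Suc m)) \<le> d x}" for m
  have E_null: "E m \<in> null_sets \<nu>" for m
  proof -
    have "E m \<in> sets \<nu>"
      unfolding E_def using superlevel_set_closed[OF M_closed d_cont] S by simp
    then show ?thesis
      unfolding E_def using null[of "inverse (real (Suc m))"]
      by (simp add: null_sets_def emeasure_eq_measure)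
  qed
  have "{x \<in> M. 0 < d x} = (\<Union>m. E m)"
  proof (intro equalityI subsetI)
    fix x assume x: "x \<in> {x \<in> M. 0 < d x}"
    then obtain m where "inverse (real (Suc m)) < d x"
      using reals_Archimedean by auto
    then have "x \<in> E m"
      using x unfolding E_def by simp
    then show "x \<in> (\<Union>m. E m)"
      by blast
  next
    fix x assume "x \<in> (\<Union>m. E m)"
    then obtain m where x: "x \<in> M" and le: "inverse (real (Suc m)) \<le> d x"
      unfolding E_def by blast
    have "0 < d x"
      by (rule order_less_le_trans[OF _ le]) simp
    with x show "x \<in> {x \<in> M. 0 < d x}"
      by simp
  qed
  moreover have "(\<Union>m. E m) \<in> null_sets \<nu>"
    using E_null by (rule null_sets_UN)
  ultimately show ?thesis
    by (simp add: measure_eq_0_null_sets)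
qed

section \<open>Limits of quasi-stationary distributions\<close>

text \<open>The setting of the theorem, with the hypotheses that are actually needed.\<close>

locale qsd_limit =
  fixes M M0 M1 :: "'a::euclidean_space set"
    and F :: "'a \<Rightarrow> 'a"
    and p :: "real \<Rightarrow> 'a \<Rightarrow> 'a measure"
    and eps :: "nat \<Rightarrow> real" and lam :: "nat \<Rightarrow> real"
    and \<mu>s :: "nat \<Rightarrow> 'a measure" and \<mu> :: "'a measure"
  assumes M_closed: "closed M"
    and F_cont: "continuous_on M F" and F_into: "F ` M \<subseteq> M" and F_bdd: "bounded (F ` M)"
    and kernels: "markov_kernels_on M p"
    and SH1: "\<And>\<delta>. \<delta> > 0 \<Longrightarrow>
       ((\<lambda>\<epsilon>. SUP x\<in>M. measure (p \<epsilon> x) (M - nbhd M \<delta> {F x})) \<longlongrightarrow> 0) (at_right 0)"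
    and M0_sub: "M0 \<subseteq> M" and M1_def: "M1 = M - M0"
    and F_M0: "F ` M0 \<subseteq> M0" and F_M1: "F ` M1 \<subseteq> M1"
    and M0_compact: "compact M0"
    and M0_attr: "is_attractor M F M0"
    and M0_global: "\<And>x. x \<in> M \<Longrightarrow> omega_limit M F x \<subseteq> M0"
    and eps_pos: "\<And>n. eps n > 0" and eps_lim: "eps \<longlonglongrightarrow> 0"
    and QSD: "\<And>n. is_QSD M1 (p (eps n)) (\<mu>s n) (lam n)"
    and mu_prob: "borel_prob_on M \<mu>"
    and weak: "weak_conv_on M \<mu>s \<mu>"
begin

lemma M0_closed: "closed M0"
  using M0_compact by (rule compact_imp_closed)

lemma M1_sub: "M1 \<subseteq> M"
  unfolding M1_def by blast

lemma borel_sets: "M \<in> sets borel" "M0 \<in> sets borel" "M1 \<in> sets borel"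
  using M_closed M0_closed unfolding M1_def by simp_all

lemma QSD_facts:
  "prob_space (\<mu>s n)" "sets (\<mu>s n) = sets borel" "measure (\<mu>s n) M1 = 1"
  "0 < lam n" "lam n < 1"
  "\<And>\<Gamma>. \<Gamma> \<in> sets borel \<Longrightarrow> \<Gamma> \<subseteq> M1 \<Longrightarrow>
     (LINT x:M1|\<mu>s n. measure (p (eps n) x) \<Gamma>) = lam n * measure (\<mu>s n) \<Gamma>"
  using QSD[of n] unfolding is_QSD_def borel_prob_on_def by auto

lemma limit_facts: "prob_space \<mu>" "sets \<mu> = sets borel" "measure \<mu> M = 1"
  using mu_prob unfolding borel_prob_on_def by auto

lemma kernel_facts:
  assumes "x \<in> M"
  shows "prob_space (p (eps n) x)" "sets (p (eps n) x) = sets borel"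
    "measure (p (eps n) x) M = 1"
  using kernels eps_pos[of n] assms unfolding markov_kernels_on_def borel_prob_on_def by auto

text \<open>M0 is nonempty: M1 carries the probability measures mu_n, so M is nonempty, and M0 contains
  all omega-limit sets.\<close>

lemma M0_nonempty: "M0 \<noteq> {}"
proof -
  have "M1 \<noteq> {}"
    using QSD_facts(3)[of 0] by auto
  then have "M \<noteq> {}"
    using M1_sub by blast
  with M0_global show ?thesis
    by (rule global_attractor_nonempty[OF M_closed F_into F_bdd])
qed

lemma M1_eq: "M1 = {x \<in> M. 0 < infdist x M0}"
proof (intro equalityI subsetI)
  fix x assume "x \<in> M1"
  then show "x \<in> {x \<in> M. 0 < infdist x M0}"
    unfolding M1_def using infdist_pos_not_in_closed[OF M0_closed M0_nonempty] by simp
next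
  fix x assume x: "x \<in> {x \<in> M. 0 < infdist x M0}"
  then have "x \<notin> M0"
    using infdist_zero by fastforce
  with x show "x \<in> M1"
    unfolding M1_def by simp
qed

definition beta :: "real \<Rightarrow> nat \<Rightarrow> real" where
  "beta \<delta> n = (SUP x\<in>M. measure (p (eps n) x) (M - nbhd M \<delta> {F x}))"

lemma beta_upper: "x \<in> M \<Longrightarrow> measure (p (eps n) x) (M - nbhd M \<delta> {F x}) \<le> beta \<delta> n"
  unfolding beta_def
  by (rule cSUP_upper) (auto intro!: bdd_aboveI2[where M=1] prob_space.prob_le_1 kernel_facts(1))

lemma beta_nonneg: "0 \<le> beta \<delta> n"
proof -
  obtain x where "x \<in> M"
    using M0_nonempty M0_sub by blast
  then show ?thesis
    using beta_upper[of x] measure_nonneg order_trans by metis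
qed

lemma beta_lim: "\<delta> > 0 \<Longrightarrow> (\<lambda>n. beta \<delta> n) \<longlonglongrightarrow> 0"
proof -
  assume "\<delta> > 0"
  have "filterlim eps (at_right 0) sequentially"
    by (rule tendsto_imp_filterlim_at_right[OF eps_lim]) (simp add: eps_pos)
  from filterlim_compose[OF SH1[OF \<open>\<delta> > 0\<close>] this] show ?thesis
    unfolding beta_def .
qed

lemma kernel_mass_far:
  assumes x: "x \<in> M" and \<Gamma>: "\<Gamma> \<in> sets borel" "\<Gamma> \<subseteq> M"
    and far: "\<And>y. y \<in> \<Gamma> \<Longrightarrow> \<delta> \<le> dist (F x) y"
  shows "measure (p (eps n) x) \<Gamma> \<le> beta \<delta> n"
proof -
  interpret K: prob_space "p (eps n) x"
    by (rule kernel_facts(1)[OF x])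
  have eq: "M - nbhd M \<delta> {F x} = M - ball (F x) \<delta>"
    unfolding nbhd_def by (auto simp: dist_norm norm_minus_commute)
  have "\<Gamma> \<subseteq> M - nbhd M \<delta> {F x}"
    unfolding eq using \<Gamma>(2) far by force
  moreover have "M - nbhd M \<delta> {F x} \<in> sets (p (eps n) x)"
    unfolding eq using kernel_facts(2)[OF x] borel_sets(1) by simp
  ultimately have "measure (p (eps n) x) \<Gamma> \<le> measure (p (eps n) x) (M - nbhd M \<delta> {F x})"
    by (rule K.finite_measure_mono)
  also have "\<dots> \<le> beta \<delta> n"
    by (rule beta_upper[OF x])
  finally show ?thesis .
qed

text \<open>pre delta Gamma: the points of M1 whose image comes delta-close to Gamma.  Up to an error
  beta delta n, a transition from M1 can land in Gamma only from pre delta Gamma.\<close>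

definition pre :: "real \<Rightarrow> 'a set \<Rightarrow> 'a set" where
  "pre \<delta> \<Gamma> = {x \<in> M1. \<exists>y\<in>\<Gamma>. dist (F x) y < \<delta>}"

lemma pre_borel: "pre \<delta> \<Gamma> \<in> sets borel" and pre_sub: "pre \<delta> \<Gamma> \<subseteq> M1"
proof -
  have "open (\<Union>y\<in>\<Gamma>. ball y \<delta>)"
    by blast
  then obtain A where A: "open A" "A \<inter> M = F -` (\<Union>y\<in>\<Gamma>. ball y \<delta>) \<inter> M"
    using F_cont unfolding continuous_on_open_invariant by blast
  have in_A: "x \<in> A \<longleftrightarrow> (\<exists>y\<in>\<Gamma>. dist (F x) y < \<delta>)" if "x \<in> M" for x
  proof -
    have "x \<in> A \<longleftrightarrow> F x \<in> (\<Union>y\<in>\<Gamma>. ball y \<delta>)"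
      using A(2) that by blast
    then show ?thesis
      by (simp add: dist_commute)
  qed
  have "pre \<delta> \<Gamma> = M1 \<inter> A"
    using in_A M1_sub unfolding pre_def by blast
  then show "pre \<delta> \<Gamma> \<in> sets borel"
    using borel_sets(3) A(1) by simp
  show "pre \<delta> \<Gamma> \<subseteq> M1"
    unfolding pre_def by blast
qed

lemma one_step_pointwise:
  assumes \<Gamma>: "\<Gamma> \<in> sets borel" "\<Gamma> \<subseteq> M1"
  shows "indicator M1 x * measure (p (eps n) x) \<Gamma>
      \<le> beta \<delta> n * indicator M1 x + indicator (pre \<delta> \<Gamma>) x"
proof (cases "x \<in> M1")
  case False
  then show ?thesis using beta_nonneg[of \<delta> n] by simp
next
  case True
  then have x: "x \<in> M"
    using M1_sub by blast
  show ?thesis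
  proof (cases "x \<in> pre \<delta> \<Gamma>")
    case True
    have "measure (p (eps n) x) \<Gamma> \<le> 1"
      by (rule prob_space.prob_le_1[OF kernel_facts(1)[OF x]])
    then show ?thesis
      using True \<open>x \<in> M1\<close> beta_nonneg[of \<delta> n] by simp
  next
    case False
    then have "\<delta> \<le> dist (F x) y" if "y \<in> \<Gamma>" for y
      using \<open>x \<in> M1\<close> that unfolding pre_def by force
    then have "measure (p (eps n) x) \<Gamma> \<le> beta \<delta> n"
      using \<Gamma> M1_sub by (intro kernel_mass_far[OF x]) auto
    then show ?thesis
      using \<open>x \<in> M1\<close> False by simp
  qed
qed

lemma one_step:
  assumes \<Gamma>: "\<Gamma> \<in> sets borel" "\<Gamma> \<subseteq> M1"
  shows "lam n * measure (\<mu>s n) \<Gamma> \<le> beta \<delta> n + measure (\<mu>s n) (pre \<delta> \<Gamma>)"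
proof -
  interpret P: prob_space "\<mu>s n"
    by (rule QSD_facts(1))
  have int_M1: "integrable (\<mu>s n) (indicator M1 :: 'a \<Rightarrow> real)"
    using borel_sets(3) QSD_facts(2) by (intro integrable_real_indicator) (simp_all add: less_top[symmetric])
  have int_pre: "integrable (\<mu>s n) (indicator (pre \<delta> \<Gamma>) :: 'a \<Rightarrow> real)"
    using pre_borel QSD_facts(2) by (intro integrable_real_indicator) (simp_all add: less_top[symmetric])
  have "lam n * measure (\<mu>s n) \<Gamma> = integral\<^sup>L (\<mu>s n) (\<lambda>x. indicator M1 x * measure (p (eps n) x) \<Gamma>)"
    using QSD_facts(6)[OF \<Gamma>] unfolding set_lebesgue_integral_def by simp
  also have "\<dots> \<le> integral\<^sup>L (\<mu>s n) (\<lambda>x. beta \<delta> n * indicator M1 x + indicator (pre \<delta> \<Gamma>) x)"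
    using int_M1 int_pre one_step_pointwise[OF \<Gamma>] beta_nonneg by (intro integral_mono') auto
  also have "\<dots> = beta \<delta> n * measure (\<mu>s n) M1 + measure (\<mu>s n) (pre \<delta> \<Gamma>)"
    using int_M1 int_pre space_eq_UNIV_if_sets_borel[OF QSD_facts(2)] by simp
  also have "\<dots> = beta \<delta> n + measure (\<mu>s n) (pre \<delta> \<Gamma>)"
    using QSD_facts(3) by simp
  finally show ?thesis .
qed

lemma pre_iterate_borel:
  assumes "B \<in> sets borel" "B \<subseteq> M1"
  shows "(pre \<delta> ^^ j) B \<in> sets borel" and "(pre \<delta> ^^ j) B \<subseteq> M1"
  using assms pre_borel pre_sub by (cases j; simp)+

text \<open>Iterating (and using lambda_n <= 1):
  lambda_n^j mu_n(B) <= j beta delta n + mu_n((pre delta ^^ j) B).\<close>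

lemma iterated_one_step:
  assumes B: "B \<in> sets borel" "B \<subseteq> M1"
  shows "lam n ^ j * measure (\<mu>s n) B \<le> real j * beta \<delta> n + measure (\<mu>s n) ((pre \<delta> ^^ j) B)"
proof (induction j)
  case 0
  then show ?case by simp
next
  case (Suc j)
  have lam: "0 \<le> lam n" "lam n \<le> 1"
    using QSD_facts(4,5)[of n] by simp_all
  have "lam n ^ Suc j * measure (\<mu>s n) B
      \<le> lam n * (real j * beta \<delta> n + measure (\<mu>s n) ((pre \<delta> ^^ j) B))"
    using mult_left_mono[OF Suc.IH lam(1)] by simp
  also have "\<dots> \<le> real j * beta \<delta> n + lam n * measure (\<mu>s n) ((pre \<delta> ^^ j) B)"
    using mult_right_mono[OF lam(2), of "real j * beta \<delta> n"] beta_nonneg[of \<delta> n]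
    by (simp add: distrib_left)
  also have "\<dots> \<le> real (Suc j) * beta \<delta> n + measure (\<mu>s n) ((pre \<delta> ^^ Suc j) B)"
    using one_step[where \<Gamma>="(pre \<delta> ^^ j) B" and n=n and \<delta>=\<delta>] pre_iterate_borel[OF B]
    by (simp add: algebra_simps)
  finally show ?case .
qed

lemma pre_iterate_pseudo_orbit:
  assumes "x \<in> (pre \<delta> ^^ j) B" and "B \<subseteq> M1"
  shows "\<exists>y. y 0 = x \<and> pseudo_orbit M F \<delta> j y \<and> y j \<in> B"
  using assms(1)
proof (induction j arbitrary: x)
  case 0
  then have "x \<in> M"
    using assms(2) M1_sub by auto
  with 0 show ?case
    unfolding pseudo_orbit_def by (intro exI[of _ "\<lambda>_. x"]) auto
next
  case (Suc j)
  then have "x \<in> M1" and "\<exists>z\<in>(pre \<delta> ^^ j) B. dist (F x) z < \<delta>"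
    unfolding pre_def by auto
  then obtain z where z: "z \<in> (pre \<delta> ^^ j) B" "dist (F x) z < \<delta>"
    by blast
  obtain y where y: "y 0 = z" "pseudo_orbit M F \<delta> j y" "y j \<in> B"
    using Suc.IH[OF z(1)] by blast
  define y' where "y' i = (case i of 0 \<Rightarrow> x | Suc i \<Rightarrow> y i)" for i
  have "x \<in> M"
    using \<open>x \<in> M1\<close> M1_sub by blast
  then have "pseudo_orbit M F \<delta> (Suc j) y'"
    using y(1,2) z(2) unfolding pseudo_orbit_def y'_def
    by (auto simp: dist_commute split: nat.split)
  moreover have "y' 0 = x" and "y' (Suc j) \<in> B"
    using y(3) unfolding y'_def by simp_all
  ultimately show ?case
    by blast
qed



definition far :: "real \<Rightarrow> 'a set" where
  "far r = {x \<in> M. r \<le> infdist x M0}"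

lemma far_borel: "far r \<in> sets borel"
  unfolding far_def
  using superlevel_set_closed[OF M_closed continuous_on_infdist[OF continuous_on_id]] by simp

lemma far_sub_M1: "r > 0 \<Longrightarrow> far r \<subseteq> M1"
  unfolding far_def M1_eq by auto

text \<open>Since pseudo-orbits of a suitable length approach M0, far r has no k-fold delta-predecessors,
  and the iterated inequality yields lambda_n^k mu_n(far r) <= k beta delta n.\<close>

lemma far_pre_iterate_empty:
  assumes "r > 0"
  obtains \<delta> k where "\<delta> > 0" and "(pre \<delta> ^^ k) (far r) = {}"
proof -
  obtain \<delta> k where "\<delta> > 0"
    and close: "\<And>y. pseudo_orbit M F \<delta> k y \<Longrightarrow> infdist (y k) M0 < r"
    using pseudo_orbits_approach_attractor[OF M_closed F_cont F_into F_bdd M0_attr M0_global \<open>r > 0\<close>]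
    by blast
  have "x \<notin> (pre \<delta> ^^ k) (far r)" for x
  proof
    assume "x \<in> (pre \<delta> ^^ k) (far r)"
    then obtain y where "pseudo_orbit M F \<delta> k y" and "y k \<in> far r"
      using pre_iterate_pseudo_orbit[OF _ far_sub_M1[OF \<open>r > 0\<close>]] by blast
    then have "infdist (y k) M0 < r" and "r \<le> infdist (y k) M0"
      using close unfolding far_def by simp_all
    then show False
      by linarith
  qed
  then show ?thesis
    using that \<open>\<delta> > 0\<close> by blast
qed

lemma far_mass_bound:
  assumes "r > 0"
  obtains \<delta> k where "\<delta> > 0" and "\<And>n. lam n ^ k * measure (\<mu>s n) (far r) \<le> real k * beta \<delta> n"
proof -
  obtain \<delta> k where "\<delta> > 0" and empty: "(pre \<delta> ^^ k) (far r) = {}"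
    using far_pre_iterate_empty[OF \<open>r > 0\<close>] by blast
  have "lam n ^ k * measure (\<mu>s n) (far r) \<le> real k * beta \<delta> n" for n
    using iterated_one_step[OF far_borel far_sub_M1[OF \<open>r > 0\<close>], of n k \<delta>] empty by simp
  then show ?thesis
    using that \<open>\<delta> > 0\<close> by blast
qed

text \<open>escape t: the points of M whose image is at distance at least t from M0.  Starting there,
  the chain stays in M1 with probability at least 1 - beta t n, which bounds lambda_n from below.\<close>

definition escape :: "real \<Rightarrow> 'a set" where
  "escape t = {x \<in> M. t \<le> infdist (F x) M0}"

lemma escape_borel: "escape t \<in> sets borel"
  unfolding escape_def
  using superlevel_set_closed[OF M_closed continuous_on_infdist[OF F_cont]] by simp

text \<open>Since F preserves both M0 and M1, a point lies in M1 exactly when its image is away from M0.\<close>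

lemma M1_eq_escaping: "M1 = {x \<in> M. 0 < infdist (F x) M0}"
proof (intro equalityI subsetI)
  fix x assume "x \<in> M1"
  then have "x \<in> M" and "F x \<in> M1"
    using F_M1 M1_sub by blast+
  then show "x \<in> {x \<in> M. 0 < infdist (F x) M0}"
    unfolding M1_eq by simp
next
  fix x assume x: "x \<in> {x \<in> M. 0 < infdist (F x) M0}"
  have "x \<notin> M0"
  proof
    assume "x \<in> M0"
    then have "infdist (F x) M0 = 0"
      using F_M0 by (intro infdist_zero) blast
    then show False
      using x by simp
  qed
  with x show "x \<in> M1"
    unfolding M1_def by simp
qed

lemma escape_sub_M1: "t > 0 \<Longrightarrow> escape t \<subseteq> M1"
  unfolding escape_def M1_eq_escaping by auto

lemma kernel_escape_mass:
  assumes "x \<in> escape \<delta>"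
  shows "1 - beta \<delta> n \<le> measure (p (eps n) x) M1"
proof -
  have x: "x \<in> M" and far_image: "\<delta> \<le> infdist (F x) M0"
    using assms unfolding escape_def by simp_all
  interpret K: prob_space "p (eps n) x"
    by (rule kernel_facts(1)[OF x])
  have "measure (p (eps n) x) M1 = measure (p (eps n) x) M - measure (p (eps n) x) M0"
    unfolding M1_def using kernel_facts(2)[OF x] borel_sets M0_sub
    by (intro K.finite_measure_Diff) simp_all
  also have "\<dots> = 1 - measure (p (eps n) x) M0"
    using kernel_facts(3)[OF x] by simp
  finally have "measure (p (eps n) x) M1 = 1 - measure (p (eps n) x) M0" .
  moreover have "measure (p (eps n) x) M0 \<le> beta \<delta> n"
  proof (rule kernel_mass_far[OF x borel_sets(2) M0_sub])
    fix y assume "y \<in> M0"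
    then have "infdist (F x) M0 \<le> dist (F x) y"
      by (rule infdist_le)
    then show "\<delta> \<le> dist (F x) y"
      using far_image by simp
  qed
  ultimately show ?thesis
    by simp
qed

lemma eigenvalue_lower_bound:
  assumes "\<delta> > 0"
  shows "(1 - beta \<delta> n) * measure (\<mu>s n) (escape \<delta>) \<le> lam n"
proof -
  interpret P: prob_space "\<mu>s n"
    by (rule QSD_facts(1))
  define f where "f x = indicator M1 x * measure (p (eps n) x) M1" for x
  have "integral\<^sup>L (\<mu>s n) f = lam n"
    using QSD_facts(6)[OF borel_sets(3) subset_refl, of n] QSD_facts(3)[of n]
    unfolding f_def set_lebesgue_integral_def by simp
  have int_f: "integrable (\<mu>s n) f"
  proof (rule ccontr)
    assume "\<not> integrable (\<mu>s n) f"
    then have "integral\<^sup>L (\<mu>s n) f = 0"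
      by (rule not_integrable_integral_eq)
    then show False
      using \<open>integral\<^sup>L (\<mu>s n) f = lam n\<close> QSD_facts(4)[of n] by simp
  qed
  have "integrable (\<mu>s n) (indicator (escape \<delta>) :: 'a \<Rightarrow> real)"
    using escape_borel QSD_facts(2) by (intro integrable_real_indicator) (simp_all add: less_top[symmetric])
  then have int_escape: "integrable (\<mu>s n) (\<lambda>x. (1 - beta \<delta> n) * indicator (escape \<delta>) x)"
    by simp
  have bound: "(1 - beta \<delta> n) * indicator (escape \<delta>) x \<le> f x" for x
  proof (cases "x \<in> escape \<delta>")
    case False
    then show ?thesis
      unfolding f_def by (simp add: indicator_def)
  next
    case True
    then have "x \<in> M1"
      using escape_sub_M1[OF \<open>\<delta> > 0\<close>] by blast
    have "1 - beta \<delta> n \<le> measure (p (eps n) x) M1"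
      using True by (rule kernel_escape_mass)
    then show ?thesis
      using True \<open>x \<in> M1\<close> unfolding f_def by simp
  qed
  have "integral\<^sup>L (\<mu>s n) (\<lambda>x. (1 - beta \<delta> n) * indicator (escape \<delta>) x) \<le> integral\<^sup>L (\<mu>s n) f"
    by (rule integral_mono[OF int_escape int_f bound])
  then show ?thesis
    using \<open>integral\<^sup>L (\<mu>s n) f = lam n\<close> space_eq_UNIV_if_sets_borel[OF QSD_facts(2)] by simp
qed

text \<open>If mu charges M1, the eigenvalues lambda_n stay bounded away from zero: mu charges some
  escape set, weak convergence transfers a fixed part of this mass to mu_n, and beta tends to zero.\<close>

lemma escape_mass_positive:
  assumes "measure \<mu> M1 \<noteq> 0"
  obtains t where "t > 0" and "measure \<mu> (escape t) \<noteq> 0"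
proof (rule ccontr)
  assume "\<not> thesis"
  then have "\<And>t. t > 0 \<Longrightarrow> measure \<mu> {x \<in> M. t \<le> infdist (F x) M0} = 0"
    using that unfolding escape_def by blast
  then have "measure \<mu> {x \<in> M. 0 < infdist (F x) M0} = 0"
    by (rule null_if_superlevels_null[OF limit_facts(1,2) M_closed continuous_on_infdist[OF F_cont]])
  then show False
    using assms unfolding M1_eq_escaping by simp
qed

lemma eigenvalues_bounded_below:
  assumes "measure \<mu> M1 \<noteq> 0"
  obtains c N where "c > 0" and "\<And>n. n \<ge> N \<Longrightarrow> c \<le> lam n"
proof -
  have d_cont: "continuous_on M (\<lambda>x. infdist (F x) M0)"
    by (rule continuous_on_infdist[OF F_cont])
  obtain t where "t > 0" and "measure \<mu> (escape t) \<noteq> 0"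
    using escape_mass_positive[OF assms] by blast
  define \<delta> where "\<delta> = t / 2"
  have "\<delta> > 0" and t: "t = 2 * \<delta>"
    using \<open>t > 0\<close> unfolding \<delta>_def by simp_all
  define c0 where "c0 = measure \<mu> (escape t)"
  have "c0 > 0"
    unfolding c0_def using \<open>measure \<mu> (escape t) \<noteq> 0\<close> measure_nonneg[of \<mu>] by (simp add: order_less_le)
  then have "eventually (\<lambda>n. c0 / 2 < measure (\<mu>s n) (escape \<delta>)) sequentially"
    unfolding c0_def escape_def t
    by (intro weak_conv_superlevel[OF weak QSD_facts(1,2) limit_facts(1,2) M_closed d_cont \<open>\<delta> > 0\<close>])
      simp
  moreover have "eventually (\<lambda>n. beta \<delta> n < 1 / 2) sequentially"
    by (rule order_tendstoD(2)[OF beta_lim[OF \<open>\<delta> > 0\<close>]]) simp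
  ultimately have "eventually (\<lambda>n. c0 / 4 \<le> lam n) sequentially"
  proof eventually_elim
    case (elim n)
    then have "(1 / 2) * (c0 / 2) \<le> (1 - beta \<delta> n) * measure (\<mu>s n) (escape \<delta>)"
      using \<open>c0 > 0\<close> by (intro mult_mono) auto
    also have "\<dots> \<le> lam n"
      by (rule eigenvalue_lower_bound[OF \<open>\<delta> > 0\<close>])
    finally show ?case by simp
  qed
  then obtain N where N: "\<And>n. n \<ge> N \<Longrightarrow> c0 / 4 \<le> lam n"
    unfolding eventually_sequentially by blast
  have "c0 / 4 > 0"
    using \<open>c0 > 0\<close> by simp
  then show ?thesis
    using N by (rule that)
qed

text \<open>With lambda_n >= c > 0 the bound on far sets forces mu_n(far r) -> 0, so mu(far (2 r)) = 0.\<close>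

lemma far_null:
  assumes "c > 0" and lam_bound: "\<And>n. n \<ge> N \<Longrightarrow> c \<le> lam n" and "r > 0"
  shows "measure \<mu> (far (2 * r)) = 0"
proof -
  obtain \<delta> k where "\<delta> > 0"
    and mass: "\<And>n. lam n ^ k * measure (\<mu>s n) (far r) \<le> real k * beta \<delta> n"
    using far_mass_bound[OF \<open>r > 0\<close>] by blast
  have bound: "measure (\<mu>s n) (far r) \<le> real k * beta \<delta> n / c ^ k" if "n \<ge> N" for n
  proof -
    have "c ^ k * measure (\<mu>s n) (far r) \<le> lam n ^ k * measure (\<mu>s n) (far r)"
      using \<open>c > 0\<close> lam_bound[OF that] by (intro mult_right_mono power_mono) auto
    also have "\<dots> \<le> real k * beta \<delta> n"
      by (rule mass)
    finally show ?thesis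
      using \<open>c > 0\<close> by (simp add: pos_le_divide_eq mult.commute)
  qed
  have "(\<lambda>n. real k * beta \<delta> n / c ^ k) \<longlonglongrightarrow> real k * 0 / c ^ k"
    by (intro tendsto_intros beta_lim[OF \<open>\<delta> > 0\<close>]) (use \<open>c > 0\<close> in simp)
  then have upper: "(\<lambda>n. real k * beta \<delta> n / c ^ k) \<longlonglongrightarrow> 0"
    by simp
  have "(\<lambda>n. measure (\<mu>s n) (far r)) \<longlonglongrightarrow> 0"
  proof (rule tendsto_sandwich[OF _ _ tendsto_const upper])
    show "eventually (\<lambda>n. 0 \<le> measure (\<mu>s n) (far r)) sequentially"
      by simp
    show "eventually (\<lambda>n. measure (\<mu>s n) (far r) \<le> real k * beta \<delta> n / c ^ k) sequentially"
      using bound unfolding eventually_sequentially by blast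
  qed
  then show ?thesis
    unfolding far_def
    by (rule weak_conv_superlevel_null[OF weak QSD_facts(1,2) limit_facts(1,2) M_closed
          continuous_on_infdist[OF continuous_on_id] \<open>r > 0\<close>])
qed

text \<open>The limit measure gives no mass to M1: otherwise the two previous lemmas make every far set,
  hence M1 itself, null.\<close>

lemma M1_null: "measure \<mu> M1 = 0"
proof (rule ccontr)
  assume "measure \<mu> M1 \<noteq> 0"
  then obtain c N where "c > 0" and lam_bound: "\<And>n. n \<ge> N \<Longrightarrow> c \<le> lam n"
    using eigenvalues_bounded_below by blast
  have "measure \<mu> (far t) = 0" if "t > 0" for t
    using far_null[OF \<open>c > 0\<close> lam_bound, where r="t / 2"] that by simp
  then have "measure \<mu> {x \<in> M. 0 < infdist x M0} = 0"
    unfolding far_def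
    by (intro null_if_superlevels_null[OF limit_facts(1,2) M_closed continuous_on_infdist[OF continuous_on_id]])
      simp
  then show False
    using \<open>measure \<mu> M1 \<noteq> 0\<close> unfolding M1_eq by simp
qed

end

theorem mainTheorem9:
  fixes M M0 M1 :: "'a::euclidean_space set"
    and F :: "'a \<Rightarrow> 'a"
    and p :: "real \<Rightarrow> 'a \<Rightarrow> 'a measure"
    and eps :: "nat \<Rightarrow> real" and lam :: "nat \<Rightarrow> real"
    and \<mu>s :: "nat \<Rightarrow> 'a measure" and \<mu> :: "'a measure"
  assumes M_closed: "closed M"
    and F_cont: "continuous_on M F" and F_into: "F ` M \<subseteq> M" and F_bdd: "bounded (F ` M)"
    and kernels: "markov_kernels_on M p"
    and SH1: "\<And>\<delta>. \<delta> > 0 \<Longrightarrow>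
       ((\<lambda>\<epsilon>. SUP x\<in>M. measure (p \<epsilon> x) (M - nbhd M \<delta> {F x})) \<longlongrightarrow> 0) (at_right 0)"
    and M0_closed: "closedin (top_of_set M) M0" and M0_sub: "M0 \<subseteq> M"
    and M1_def: "M1 = M - M0"
    and F_M0: "F ` M0 \<subseteq> M0" and F_M1: "F ` M1 \<subseteq> M1"
    and absorb: "\<And>\<epsilon> x. \<epsilon> > 0 \<Longrightarrow> x \<in> M0 \<Longrightarrow> measure (p \<epsilon> x) M1 = 0"
    and M0_compact: "compact M0"
    and M0_attr: "is_attractor M F M0"
    and M0_global: "\<And>x. x \<in> M \<Longrightarrow> omega_limit M F x \<subseteq> M0"
    and eps_pos: "\<And>n. eps n > 0" and eps_dec: "decseq eps" and eps_lim: "eps \<longlonglongrightarrow> 0"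
    and QSD: "\<And>n. is_QSD M1 (p (eps n)) (\<mu>s n) (lam n)"
    and mu_prob: "borel_prob_on M \<mu>"
    and weak: "weak_conv_on M \<mu>s \<mu>"
  shows "measure \<mu> M0 = 1"
proof -
  interpret qsd_limit M M0 M1 F p eps lam \<mu>s \<mu>
    by (rule qsd_limit.intro) (fact assms)+
  interpret limit: prob_space \<mu>
    by (rule limit_facts(1))
  have "measure \<mu> M1 = measure \<mu> M - measure \<mu> M0"
    unfolding \<open>M1 = M - M0\<close> using limit_facts(2) borel_sets M0_sub
    by (intro limit.finite_measure_Diff) simp_all
  then show ?thesis
    using M1_null limit_facts(3) by simp
qed

end
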